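(* Let $K=2^m$ with $m\in\mathbb{N}$, let $\gamma,\delta>0$, and let $a\in\mathbb{R}^{K-1}$ have $a_i=\gamma$ for odd $i$ and $a_i=\delta$ for even $i$ ($i=1,\dots,K-1$), so $\gamma$ appears $K/2$ times and $\delta$ appears $K/2-1$ times. Then $$\big(\Psi e^{-\Psi a}\big)_i=\begin{cases}2e^{-K\gamma}+(K-2)e^{-\frac K2(\gamma+\delta)}, & i\text{ odd},\\ Ke^{-\frac K2(\gamma+\delta)}, & i\text{ even},\end{cases}$$ where the exponential $e^{-\Psi a}$ is taken entrywise.
   Context: Sylvester Hadamard matrices: $\Phi_1=(1)$, $\Phi_{2^m}=\begin{bmatrix}\Phi_{2^{m-1}}&\Phi_{2^{m-1}}\\ \Phi_{2^{m-1}}&-\Phi_{2^{m-1}}\end{bmatrix}$, $\Phi=\Phi_K$. $\Psi\in\mathbb{R}^{(K-1)\times(K-1)}$ is obtained from $1_K1_K^T-\Phi$ by deleting its first row and first column, with rows/columns of $\Psi$ indexed $1,\dots,K-1$. *)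

theory Defs
  imports Complex_Main
begin

text \<open>Sylvester Hadamard matrix of order 2^m, as a function of 0-based indices
  i, j < 2^m, defined by the block recursion
  Phi_{2^(m+1)} = [[Phi, Phi], [Phi, -Phi]].\<close>
fun sylvester :: "nat \<Rightarrow> nat \<Rightarrow> nat \<Rightarrow> real" where
  "sylvester 0 i j = 1"
| "sylvester (Suc m) i j =
     (if i < 2^m \<and> j < 2^m then sylvester m i j
      else if i < 2^m then sylvester m i (j - 2^m)
      else if j < 2^m then sylvester m (i - 2^m) j
      else - sylvester m (i - 2^m) (j - 2^m))"

text \<open>Psi: the matrix 1 1^T - Phi with first row and column deleted. Rows/columns
  of Psi are indexed 1..K-1; Psi index i corresponds to the 0-based index i of Phi.\<close>
definition Psi :: "nat \<Rightarrow> nat \<Rightarrow> nat \<Rightarrow> real" where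
  "Psi m i j = 1 - sylvester m i j"

end

theory Submission
  imports Defs
begin

text \<open>The rows of \<Phi> are orthogonal, row 0 is constantly 1 and row 1 is \<open>((-1)^k)\<^sub>k\<close>.
  Since row and column 0 of \<open>1 1\<^sup>T - \<Phi>\<close> vanish, \<Psi> applied to row \<open>l\<close> of \<Phi> is \<open>K (e\<^sub>0 - e\<^sub>l)\<close>.
  Writing \<open>a = ((\<gamma>+\<delta>)/2) \<Phi>\<^sub>0 - ((\<gamma>-\<delta>)/2) \<Phi>\<^sub>1\<close>, the vector \<open>\<Psi> a\<close> is \<open>K \<gamma>\<close> at index 1 and
  \<open>K (\<gamma>+\<delta>)/2\<close> elsewhere. So \<open>e\<^sup>-\<^sup>\<Psi>\<^sup>a\<close> is constant except in one entry, and \<Psi> applied to it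
  only involves the row sums \<open>K\<close> of \<Psi> and the column \<open>\<Psi>\<^sub>i\<^sub>1 = 1 - (-1)^i\<close>.\<close>

lemma sum_lessThan_double:
  fixes n :: nat
  shows "(\<Sum>k<n + n. f k) = (\<Sum>k<n. f k) + (\<Sum>k<n. f (k + n) :: 'a :: comm_monoid_add)"
  by (simp add: atLeast0LessThan[symmetric] sum.atLeastLessThan_concat[of 0 n "n + n", symmetric]
      sum.shift_bounds_nat_ivl[of f 0 n n, simplified])

lemma sylvester_commute: "sylvester m i j = sylvester m j i"
  by (induction m arbitrary: i j) auto

lemma sylvester_0_right: "i < 2 ^ m \<Longrightarrow> sylvester m i 0 = 1"
  by (induction m arbitrary: i) auto

lemma sylvester_0_left: "j < 2 ^ m \<Longrightarrow> sylvester m 0 j = 1"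
  using sylvester_0_right[of j m] by (simp add: sylvester_commute)

lemma sylvester_Suc_left_half:
  assumes "i < 2 ^ Suc m" and "k < 2 ^ m"
  shows "sylvester (Suc m) i k = sylvester m (i mod 2 ^ m) k"
  using assms by (cases "i < 2 ^ m") (auto simp: le_mod_geq)

lemma sylvester_Suc_right_half:
  assumes "i < 2 ^ Suc m" and "k < 2 ^ m"
  shows "sylvester (Suc m) i (k + 2 ^ m) =
    (if i < 2 ^ m then 1 else -1) * sylvester m (i mod 2 ^ m) k"
  using assms by (cases "i < 2 ^ m") (auto simp: le_mod_geq)

declare sylvester.simps(2) [simp del]

lemma sylvester_1_right:
  assumes "0 < m" and "i < 2 ^ m"
  shows "sylvester m i 1 = (if odd i then -1 else 1)"
  using assms
proof (induction m arbitrary: i rule: nat_induct_non_zero)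
  case 1
  then have "i = 0 \<or> i = 1" by auto
  then show ?case by (auto simp: sylvester.simps)
next
  case (Suc m)
  have "1 < (2::nat) ^ m" using \<open>0 < m\<close> one_less_power[of "2::nat" m] by simp
  moreover have "odd (i mod 2 ^ m) = odd i" using \<open>0 < m\<close> by (simp add: dvd_mod_iff)
  ultimately show ?case
    using Suc.IH[of "i mod 2 ^ m"] Suc.prems sylvester_Suc_left_half by simp
qed

lemma sylvester_1_left: "0 < m \<Longrightarrow> j < 2 ^ m \<Longrightarrow> sylvester m 1 j = (if odd j then -1 else 1)"
  using sylvester_1_right[of m j] by (simp add: sylvester_commute)

lemma sylvester_orthogonal:
  assumes "i < 2 ^ m" and "j < 2 ^ m"
  shows "(\<Sum>k<2 ^ m. sylvester m i k * sylvester m j k) = (if i = j then 2 ^ m else 0)"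
  using assms
proof (induction m arbitrary: i j)
  case 0
  then show ?case by simp
next
  case (Suc m)
  define n :: nat where "n = 2 ^ m"
  define s :: "nat \<Rightarrow> real" where "s x = (if x < n then 1 else -1)" for x
  have IH: "(\<Sum>k<n. sylvester m (i mod n) k * sylvester m (j mod n) k) =
      (if i mod n = j mod n then n else 0)"
    using Suc.IH[of "i mod n" "j mod n"] by (simp add: n_def)
  have "(\<Sum>k<2 ^ Suc m. sylvester (Suc m) i k * sylvester (Suc m) j k) =
      (\<Sum>k<n. sylvester m (i mod n) k * sylvester m (j mod n) k) +
      (\<Sum>k<n. s i * s j * (sylvester m (i mod n) k * sylvester m (j mod n) k))"
    using Suc.prems
    by (simp add: n_def s_def mult_2 sum_lessThan_double sylvester_Suc_left_half
        sylvester_Suc_right_half algebra_simps)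
  also have "\<dots> = (1 + s i * s j) * (if i mod n = j mod n then n else 0)"
    by (simp add: IH sum_distrib_left[symmetric] algebra_simps)
  also have "\<dots> = (if i = j then 2 ^ Suc m else 0)"
  proof -
    have "i = j \<longleftrightarrow> i mod n = j mod n \<and> (i < n \<longleftrightarrow> j < n)"
      using Suc.prems by (auto simp: n_def le_mod_geq)
    then show ?thesis by (auto simp: s_def n_def)
  qed
  finally show ?case .
qed

lemma Psi_0_right: "i < 2 ^ m \<Longrightarrow> Psi m i 0 = 0"
  by (simp add: Psi_def sylvester_0_right)

lemma Psi_1_right: "0 < m \<Longrightarrow> i < 2 ^ m \<Longrightarrow> Psi m i 1 = (if odd i then 2 else 0)"
  using sylvester_1_right[of m i] by (simp add: Psi_def)

lemma Psi_mult_sylvester_row: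
  assumes "i < 2 ^ m" and "l < 2 ^ m"
  shows "(\<Sum>k = 1..2 ^ m - 1. Psi m i k * sylvester m l k) =
    (if l = 0 then 2 ^ m else 0) - (if l = i then 2 ^ m else 0)"
proof -
  have "{..<2 ^ m} = insert 0 {1..2 ^ m - 1 :: nat}" by auto
  then have "(\<Sum>k = 1..2 ^ m - 1. Psi m i k * sylvester m l k) =
      (\<Sum>k<2 ^ m. Psi m i k * sylvester m l k)"
    using assms by (simp add: Psi_0_right)
  also have "\<dots> = (\<Sum>k<2 ^ m. sylvester m 0 k * sylvester m l k - sylvester m i k * sylvester m l k)"
    by (intro sum.cong refl) (simp add: Psi_def sylvester_0_left left_diff_distrib)
  also have "\<dots> = (if l = 0 then 2 ^ m else 0) - (if l = i then 2 ^ m else 0)"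
    using assms sylvester_orthogonal[of 0 m l] sylvester_orthogonal[of i m l]
    by (simp add: sum_subtractf)
  finally show ?thesis .
qed

lemma Psi_row_sum:
  assumes "1 \<le> i" and "i < 2 ^ m"
  shows "(\<Sum>k = 1..2 ^ m - 1. Psi m i k) = 2 ^ m"
proof -
  have "(\<Sum>k = 1..2 ^ m - 1. Psi m i k) = (\<Sum>k = 1..2 ^ m - 1. Psi m i k * sylvester m 0 k)"
    by (intro sum.cong refl) (simp add: sylvester_0_left le_diff_conv2)
  then show ?thesis
    using Psi_mult_sylvester_row[of i m 0] assms by simp
qed

lemma Psi_mult_alternating:
  fixes \<gamma> \<delta> :: real
  assumes "0 < m" and "1 \<le> j" and "j < 2 ^ m"
  shows "(\<Sum>k = 1..2 ^ m - 1. Psi m j k * (if odd k then \<gamma> else \<delta>)) =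
    (if j = 1 then 2 ^ m * \<gamma> else 2 ^ m / 2 * (\<gamma> + \<delta>))"
proof -
  have alternating_eq: "(if odd k then \<gamma> else \<delta>) =
      (\<gamma> + \<delta>) / 2 * sylvester m 0 k - (\<gamma> - \<delta>) / 2 * sylvester m 1 k"
    if "k \<in> {1..2 ^ m - 1}" for k
  proof -
    have "k < 2 ^ m" using that by (simp add: le_diff_conv2)
    then show ?thesis
      using sylvester_0_left[of k m] sylvester_1_left[OF \<open>0 < m\<close>, of k] by (simp add: field_simps)
  qed
  have "(\<Sum>k = 1..2 ^ m - 1. Psi m j k * (if odd k then \<gamma> else \<delta>)) =
      (\<Sum>k = 1..2 ^ m - 1. Psi m j k *
        ((\<gamma> + \<delta>) / 2 * sylvester m 0 k - (\<gamma> - \<delta>) / 2 * sylvester m 1 k))"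
    by (intro sum.cong refl) (simp only: alternating_eq)
  also have "\<dots> = (\<gamma> + \<delta>) / 2 * (\<Sum>k = 1..2 ^ m - 1. Psi m j k * sylvester m 0 k) -
      (\<gamma> - \<delta>) / 2 * (\<Sum>k = 1..2 ^ m - 1. Psi m j k * sylvester m 1 k)"
    by (simp add: right_diff_distrib sum_subtractf sum_distrib_left mult.left_commute)
  also have "\<dots> = (if j = 1 then 2 ^ m * \<gamma> else 2 ^ m / 2 * (\<gamma> + \<delta>))"
    using assms Psi_mult_sylvester_row[of j m 0] Psi_mult_sylvester_row[of j m 1] one_less_power[of "2::nat" m]
    by (simp add: field_simps)
  finally show ?thesis .
qed

theorem lemmaD8:
  fixes m :: nat and \<gamma> \<delta> :: real and a :: "nat \<Rightarrow> real" and i :: nat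
  defines "K \<equiv> (2::nat) ^ m"
  assumes "\<gamma> > 0" and "\<delta> > 0"
    and "\<And>k. a k = (if odd k then \<gamma> else \<delta>)"
    and "1 \<le> i" and "i \<le> K - 1"
  shows "(\<Sum>j = 1..K - 1. Psi m i j * exp (- (\<Sum>k = 1..K - 1. Psi m j k * a k))) =
    (if odd i then 2 * exp (- real K * \<gamma>) + (real K - 2) * exp (- (real K / 2) * (\<gamma> + \<delta>))
     else real K * exp (- (real K / 2) * (\<gamma> + \<delta>)))"
proof -
  have "0 < m" and "i < 2 ^ m" and "1 \<in> {1..K - 1}"
    using assms(5,6) by (auto simp: K_def intro: gr0I)
  define X where "X = exp (- real K * \<gamma>)"
  define Y where "Y = exp (- (real K / 2) * (\<gamma> + \<delta>))"
  have exp_Psi_a: "exp (- (\<Sum>k = 1..K - 1. Psi m j k * a k)) = (if j = 1 then X else Y)"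
    if "j \<in> {1..K - 1}" for j
  proof -
    have "1 \<le> j" and "j < 2 ^ m" using that by (simp_all add: K_def le_diff_conv2)
    then have "(\<Sum>k = 1..K - 1. Psi m j k * a k) = (if j = 1 then real K * \<gamma> else real K / 2 * (\<gamma> + \<delta>))"
      using Psi_mult_alternating[OF \<open>0 < m\<close>] by (simp add: assms(4) K_def)
    then show ?thesis by (simp add: X_def Y_def)
  qed
  have "(\<Sum>j = 1..K - 1. Psi m i j * exp (- (\<Sum>k = 1..K - 1. Psi m j k * a k))) =
      (\<Sum>j = 1..K - 1. Psi m i j * Y + (if j = 1 then Psi m i 1 * (X - Y) else 0))"
    by (intro sum.cong refl) (simp only: exp_Psi_a, simp add: algebra_simps)
  also have "\<dots> = real K * Y + Psi m i 1 * (X - Y)"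
    using \<open>1 \<in> {1..K - 1}\<close> Psi_row_sum[OF assms(5) \<open>i < 2 ^ m\<close>]
    by (simp add: sum.distrib sum_distrib_right[symmetric] K_def)
  also have "\<dots> = (if odd i then 2 * X + (real K - 2) * Y else real K * Y)"
    using Psi_1_right[OF \<open>0 < m\<close> \<open>i < 2 ^ m\<close>] by (simp add: algebra_simps)
  finally show ?thesis
    by (simp add: X_def Y_def)
qed

end
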